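(* Let $G$ be a finite simple undirected graph with adjacency matrix $A$, and let $a,b$ be vertices of $G$. Then the closure in $\mathbb{C}$ of the set $\{\exp(\mathrm{i}tA)_{a,b} : t\ge 0\}$ is invariant under complex conjugation. *)

theory Defs
  imports "HOL-Analysis.Analysis"
begin

definition simple_graph :: "('n::finite \<Rightarrow> 'n \<Rightarrow> bool) \<Rightarrow> bool" where
  "simple_graph E \<longleftrightarrow> (\<forall>x y. E x y \<longleftrightarrow> E y x) \<and> (\<forall>x. \<not> E x x)"

definition adj_matrix :: "('n::finite \<Rightarrow> 'n \<Rightarrow> bool) \<Rightarrow> complex^'n^'n" where
  "adj_matrix E = (\<chi> i j. if E i j then 1 else 0)"

primrec matpow :: "'a::semiring_1^'n::finite^'n \<Rightarrow> nat \<Rightarrow> 'a^'n^'n" where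
  "matpow M 0 = mat 1"
| "matpow M (Suc k) = M ** matpow M k"

definition mat_exp :: "complex^'n::finite^'n \<Rightarrow> complex^'n^'n" where
  "mat_exp M = (\<chi> i j. \<Sum>k. matpow M k $ i $ j / of_nat (fact k))"

definition mat_scale :: "complex \<Rightarrow> complex^'n::finite^'n \<Rightarrow> complex^'n^'n" where
  "mat_scale c M = (\<chi> i j. c * M $ i $ j)"

end

theory Submission
  imports Defs
begin

text \<open>Let \<open>U t = exp (i t A)\<close>. As \<open>A\<close> is real symmetric, \<open>U t\<close> is unitary and its entrywise
  conjugate is \<open>U (-t)\<close>. Unitary matrices form a bounded set, so by Bolzano-Weierstrass applied
  to the pairs \<open>(U n, U (-n))\<close> there are times \<open>m\<^sub>k \<rightarrow> \<infinity>\<close> with \<open>U m\<^sub>k \<rightarrow> 1\<close>. Then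
  \<open>U (m\<^sub>k - t) \<rightarrow> U (-t)\<close>, so \<open>cnj (U t $ a $ b) = U (-t) $ a $ b\<close> is a limit of entries at
  nonnegative times; conjugation, being a homeomorphism, then maps the closure onto itself.\<close>

lemma matpow_add: "matpow M (k + m) = matpow M k ** matpow M m"
  by (induction k) (simp_all add: matrix_mul_assoc)

lemma matpow_commute: "matpow M k ** M = M ** matpow M k"
  using matpow_add[of M k 1] matpow_add[of M 1 k] by simp

lemma matpow_mat_scale: "matpow (mat_scale c M) k = mat_scale (c ^ k) (matpow M k)"
  by (induction k)
    (simp_all add: mat_scale_def mat_def matrix_matrix_mult_def vec_eq_iff sum_distrib_left mult_ac)

lemma transpose_matpow:
  fixes M :: "'a::comm_semiring_1^'n::finite^'n"
  shows "transpose (matpow M k) = matpow (transpose M) k"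
  by (induction k) (simp_all add: matrix_transpose_mul matpow_commute)

lemma norm_matpow_nth_le:
  fixes M :: "'a::real_normed_algebra_1^'n::finite^'n"
  assumes "\<And>i j. norm (M $ i $ j) \<le> B"
  shows "norm (matpow M k $ i $ j) \<le> (real CARD('n) * B) ^ k"
proof (induction k arbitrary: i j)
  case 0
  show ?case by (simp add: mat_def)
next
  case (Suc k)
  have "0 \<le> B"
    using assms[of i i] norm_ge_zero order_trans by blast
  have "norm (matpow M (Suc k) $ i $ j) \<le> (\<Sum>l\<in>UNIV. norm (M $ i $ l) * norm (matpow M k $ l $ j))"
    unfolding matpow.simps matrix_matrix_mult_def
    by (auto intro: order_trans[OF norm_sum] sum_mono norm_mult_ineq)
  also have "\<dots> \<le> (\<Sum>l\<in>(UNIV::'n set). B * (real CARD('n) * B) ^ k)"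
    using \<open>0 \<le> B\<close> by (intro sum_mono mult_mono assms Suc.IH) auto
  also have "\<dots> = (real CARD('n) * B) ^ Suc k"
    by simp
  finally show ?case .
qed

lemma summable_norm_mat_exp_series:
  fixes M :: "complex^'n::finite^'n"
  shows "summable (\<lambda>k. norm (matpow M k $ i $ j / of_nat (fact k)))"
proof -
  define B where "B = Max (range (\<lambda>(i, j). norm (M $ i $ j)))"
  have B: "norm (M $ i $ j) \<le> B" for i j
    unfolding B_def by (rule Max_ge) auto
  show ?thesis
  proof (rule summable_comparison_test)
    show "summable (\<lambda>k. (real CARD('n) * B) ^ k /\<^sub>R fact k)"
      by (rule summable_exp_generic)
    show "\<exists>N. \<forall>k\<ge>N. norm (norm (matpow M k $ i $ j / of_nat (fact k))) \<le> (real CARD('n) * B) ^ k /\<^sub>R fact k"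
    proof (intro exI allI impI)
      fix k
      have "norm (matpow M k $ i $ j / of_nat (fact k)) = norm (matpow M k $ i $ j) / fact k"
        by (simp add: norm_divide)
      also have "\<dots> \<le> (real CARD('n) * B) ^ k / fact k"
        by (intro divide_right_mono norm_matpow_nth_le B) simp
      finally show "norm (norm (matpow M k $ i $ j / of_nat (fact k))) \<le> (real CARD('n) * B) ^ k /\<^sub>R fact k"
        by (simp add: divide_inverse_commute)
    qed
  qed
qed

lemma mat_exp_series_mat_scale:
  "matpow (mat_scale z M) k $ i $ j / of_nat (fact k) = z ^ k / fact k * matpow M k $ i $ j"
  unfolding matpow_mat_scale by (simp add: mat_scale_def)

lemma mat_exp_mat_scale_nth:
  "mat_exp (mat_scale z M) $ i $ j = (\<Sum>k. z ^ k / fact k * matpow M k $ i $ j)"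
  unfolding mat_exp_def by (simp only: vec_lambda_beta mat_exp_series_mat_scale)

lemma summable_norm_mat_exp_mat_scale_series:
  fixes M :: "complex^'n::finite^'n"
  shows "summable (\<lambda>k. norm (z ^ k / fact k * matpow M k $ i $ j))"
  using summable_norm_mat_exp_series[of "mat_scale z M" i j] by (simp only: mat_exp_series_mat_scale)

lemma mat_exp_mat_scale_add:
  fixes M :: "complex^'n::finite^'n"
  shows "mat_exp (mat_scale s M) ** mat_exp (mat_scale t M) = mat_exp (mat_scale (s + t) M)"
proof -
  let ?a = "\<lambda>z k i j. z ^ k / fact k * matpow M k $ i $ j"
  have "(mat_exp (mat_scale s M) ** mat_exp (mat_scale t M)) $ i $ j
          = mat_exp (mat_scale (s + t) M) $ i $ j" for i j
  proof -
    have "(mat_exp (mat_scale s M) ** mat_exp (mat_scale t M)) $ i $ j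
        = (\<Sum>l\<in>UNIV. \<Sum>n. \<Sum>k\<le>n. ?a s k i l * ?a t (n - k) l j)"
      unfolding matrix_matrix_mult_def mat_exp_mat_scale_nth vec_lambda_beta
      by (intro sum.cong refl Cauchy_product summable_norm_mat_exp_mat_scale_series)
    also have "\<dots> = (\<Sum>n. \<Sum>l\<in>UNIV. \<Sum>k\<le>n. ?a s k i l * ?a t (n - k) l j)"
      by (intro suminf_sum[symmetric] summable_Cauchy_product summable_norm_mat_exp_mat_scale_series)
    also have "\<dots> = (\<Sum>n. ?a (s + t) n i j)"
    proof (rule suminf_cong)
      fix n
      have "(\<Sum>l\<in>UNIV. \<Sum>k\<le>n. ?a s k i l * ?a t (n - k) l j)
          = (\<Sum>k\<le>n. s ^ k / fact k * (t ^ (n - k) / fact (n - k))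
               * (matpow M k ** matpow M (n - k)) $ i $ j)"
        unfolding matrix_matrix_mult_def
        by (subst sum.swap) (simp add: sum_distrib_left mult_ac)
      also have "\<dots> = (\<Sum>k\<le>n. s ^ k / fact k * (t ^ (n - k) / fact (n - k))) * matpow M n $ i $ j"
        by (simp add: sum_distrib_right flip: matpow_add)
      also have "(\<Sum>k\<le>n. s ^ k / fact k * (t ^ (n - k) / fact (n - k))) = (s + t) ^ n / fact n"
        using exp_series_add_commuting[of s t n] by (simp add: scaleR_conv_of_real divide_inverse mult_ac)
      finally show "(\<Sum>l\<in>UNIV. \<Sum>k\<le>n. ?a s k i l * ?a t (n - k) l j) = ?a (s + t) n i j" .
    qed
    finally show ?thesis
      by (simp only: mat_exp_mat_scale_nth)
  qed
  then show ?thesis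
    by (simp add: vec_eq_iff)
qed

lemma mat_exp_mat_scale_zero: "mat_exp (mat_scale 0 M) = mat 1"
proof -
  have "mat_exp (mat_scale 0 M) $ i $ j = (\<Sum>k. (matpow M k $ i $ j / fact k) * 0 ^ k)" for i j
    unfolding mat_exp_mat_scale_nth by (simp add: mult.commute)
  also have "\<dots> i j = matpow M 0 $ i $ j / fact 0" for i j
    by (rule powser_zero)
  finally show ?thesis
    by (simp add: vec_eq_iff mat_def)
qed

lemma transpose_mat_exp: "transpose (mat_exp M) = mat_exp (transpose M)"
  by (simp add: mat_exp_def vec_eq_iff flip: transpose_matpow) (simp add: transpose_def)

lemma transpose_mat_scale: "transpose (mat_scale c M) = mat_scale c (transpose M)"
  by (simp add: transpose_def mat_scale_def)

lemma cnj_matpow_nth: "cnj (matpow M k $ i $ j) = matpow (\<chi> i j. cnj (M $ i $ j)) k $ i $ j"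
  by (induction k arbitrary: i j) (simp_all add: mat_def matrix_matrix_mult_def)

lemma cnj_mat_exp_nth: "cnj (mat_exp M $ i $ j) = mat_exp (\<chi> i j. cnj (M $ i $ j)) $ i $ j"
proof -
  have "(\<lambda>k. matpow M k $ i $ j / of_nat (fact k)) sums (mat_exp M $ i $ j)"
    unfolding mat_exp_def vec_lambda_beta
    by (rule summable_sums, rule summable_norm_cancel, rule summable_norm_mat_exp_series)
  then have "(\<lambda>k. cnj (matpow M k $ i $ j / of_nat (fact k))) sums cnj (mat_exp M $ i $ j)"
    by (simp only: sums_cnj)
  then show ?thesis
    unfolding mat_exp_def by (simp add: cnj_matpow_nth sums_iff)
qed

lemma tendsto_matrix_mult [tendsto_intros]:
  fixes X :: "'b \<Rightarrow> 'a::real_normed_algebra_1^'n::finite^'m::finite" and Y :: "'b \<Rightarrow> 'a^'p::finite^'n"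
  assumes "(X \<longlongrightarrow> A) F" and "(Y \<longlongrightarrow> B) F"
  shows "((\<lambda>x. X x ** Y x) \<longlongrightarrow> A ** B) F"
proof -
  have "((\<lambda>x. X x $ i $ k * Y x $ k $ j) \<longlongrightarrow> A $ i $ k * B $ k $ j) F" for i j k
    by (rule tendsto_mult; rule tendsto_vec_nth, rule tendsto_vec_nth, rule assms)
  then show ?thesis
    unfolding matrix_matrix_mult_def by (auto intro!: vec_tendstoI tendsto_sum)
qed

lemma norm_eq_sqrt_card_if_unitary:
  fixes U :: "complex^'n::finite^'n"
  assumes "U ** (\<chi> i j. cnj (U $ j $ i)) = mat 1"
  shows "norm U = sqrt (real CARD('n))"
proof -
  have "norm (U $ i) = 1" for i
  proof -
    have "(\<Sum>l\<in>UNIV. U $ i $ l * cnj (U $ i $ l)) = 1"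
      using arg_cong[where f = "\<lambda>A. A $ i $ i", OF assms]
      by (simp add: matrix_matrix_mult_def mat_def)
    then have "complex_of_real (\<Sum>l\<in>UNIV. (norm (U $ i $ l))\<^sup>2) = 1"
      by (simp only: of_real_sum complex_norm_square)
    then have "(\<Sum>l\<in>UNIV. (norm (U $ i $ l))\<^sup>2) = 1"
      by (simp only: of_real_eq_1_iff)
    then show ?thesis
      by (simp add: norm_vec_def L2_set_def)
  qed
  then show ?thesis
    by (simp add: norm_vec_def L2_set_def)
qed

lemma bounded_matrix_group_recurrent:
  fixes U :: "real \<Rightarrow> 'a::{real_normed_algebra_1,heine_borel}^'n::finite^'n"
  assumes add: "\<And>s t. U (s + t) = U s ** U t" and zero: "U 0 = mat 1"
    and bounded: "bounded (range U)"
  obtains m :: "nat \<Rightarrow> real" where "\<And>k. real k \<le> m k" and "(\<lambda>k. U (m k)) \<longlonglongrightarrow> mat 1"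
proof -
  have "bounded (range (\<lambda>n::nat. (U n, U (- n))))"
    using bounded_Times[OF bounded bounded] by (rule bounded_subset) auto
  then obtain r l where r: "strict_mono r"
    and lim: "((\<lambda>n::nat. (U n, U (- n))) \<circ> r) \<longlonglongrightarrow> l"
    using bounded_imp_convergent_subsequence by blast
  define L L' where "L = fst l" and "L' = snd l"
  have L: "(\<lambda>n. U (r n)) \<longlonglongrightarrow> L" and L': "(\<lambda>n. U (- r n)) \<longlonglongrightarrow> L'"
    using tendsto_fst[OF lim] tendsto_snd[OF lim] by (simp_all add: L_def L'_def comp_def)
  have inverse: "U (r n) ** U (- r n) = mat 1" for n
    by (simp flip: add zero)
  have "L ** L' = mat 1"
    using tendsto_matrix_mult[OF L L'] unfolding inverse by (rule LIMSEQ_unique) simp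
  txt \<open>\<open>U (m k) = U (r (k + r k)) ** U (- r k)\<close> tends to \<open>L ** L' = 1\<close>, while \<open>m k \<ge> k\<close>.\<close>
  define m where "m k = real (r (k + r k)) - real (r k)" for k
  have "strict_mono (\<lambda>k. k + r k)"
    using r by (simp add: strict_mono_def add_strict_mono)
  then have "(\<lambda>k. U (r (k + r k))) \<longlonglongrightarrow> L"
    using LIMSEQ_subseq_LIMSEQ[OF L] by (simp add: comp_def)
  from tendsto_matrix_mult[OF this L'] have "(\<lambda>k. U (m k)) \<longlonglongrightarrow> mat 1"
    by (simp add: m_def \<open>L ** L' = mat 1\<close> flip: add)
  moreover have "real k \<le> m k" for k
    using seq_suble[OF r, of "k + r k"] by (simp add: m_def)
  ultimately show ?thesis
    using that by blast
qed

lemma bounded_matrix_group_nth_neg_in_closure_nonneg: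
  fixes U :: "real \<Rightarrow> 'a::{real_normed_algebra_1,heine_borel}^'n::finite^'n"
  assumes add: "\<And>s t. U (s + t) = U s ** U t" and zero: "U 0 = mat 1"
    and bounded: "bounded (range U)"
  shows "U (- t) $ a $ b \<in> closure {U s $ a $ b | s. s \<ge> 0}"
proof -
  obtain m where m_ge: "\<And>k. real k \<le> m k" and m: "(\<lambda>k. U (m k)) \<longlonglongrightarrow> mat 1"
    using bounded_matrix_group_recurrent[OF add zero bounded] by blast
  obtain N :: nat where "t \<le> real N"
    using real_arch_simple by blast
  have "U (m k + - t) \<in> closure (U ` {0..})" if "N \<le> k" for k
  proof -
    have "real N \<le> real k"
      using that by simp
    then have "m k + - t \<in> {0..}"
      using m_ge[of k] \<open>t \<le> real N\<close> by simp
    then show ?thesis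
      by (rule subsetD[OF closure_subset imageI])
  qed
  then have eventually_in: "eventually (\<lambda>k. U (m k + - t) \<in> closure (U ` {0..})) sequentially"
    by (rule eventually_sequentiallyI)
  have "(\<lambda>k. U (m k + - t)) \<longlonglongrightarrow> U (- t)"
    using tendsto_matrix_mult[OF m tendsto_const[of "U (- t)"]] by (simp only: add matrix_mul_lid)
  then have "U (- t) \<in> closure (U ` {0..})"
    by (intro Lim_in_closed_set[OF closed_closure eventually_in]) simp_all
  then have "U (- t) $ a $ b \<in> (\<lambda>X. X $ a $ b) ` closure (U ` {0..})"
    by blast
  also have "\<dots> \<subseteq> closure ((\<lambda>X. X $ a $ b) ` U ` {0..})"
    by (intro image_closure_subset closure_subset closed_closure continuous_intros)
  also have "(\<lambda>X. X $ a $ b) ` U ` {0..} = {U s $ a $ b | s. s \<ge> 0}"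
    by auto
  finally show ?thesis .
qed

lemma cnj_image_closure_eq:
  fixes S :: "complex set"
  assumes "cnj ` S \<subseteq> closure S"
  shows "cnj ` closure S = closure S"
proof -
  have sub: "cnj ` closure S \<subseteq> closure S"
    by (rule image_closure_subset[OF _ closed_closure assms]) (intro continuous_intros)
  have "closure S = cnj ` cnj ` closure S"
    by (simp add: image_image)
  also have "\<dots> \<subseteq> cnj ` closure S"
    using sub by (rule image_mono)
  finally show ?thesis
    using sub by blast
qed

lemma cnj_mat_exp_i_scale_nth:
  fixes M :: "complex^'n::finite^'n"
  assumes "\<And>i j. cnj (M $ i $ j) = M $ i $ j"
  shows "cnj (mat_exp (mat_scale (\<i> * of_real t) M) $ i $ j)
       = mat_exp (mat_scale (\<i> * of_real (- t)) M) $ i $ j"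
proof -
  have "(\<chi> i j. cnj (mat_scale (\<i> * of_real t) M $ i $ j)) = mat_scale (\<i> * of_real (- t)) M"
    by (simp add: mat_scale_def vec_eq_iff assms)
  then show ?thesis
    by (simp only: cnj_mat_exp_nth)
qed

lemma bounded_range_mat_exp_i_scale:
  fixes M :: "complex^'n::finite^'n"
  assumes symmetric: "transpose M = M" and real: "\<And>i j. cnj (M $ i $ j) = M $ i $ j"
  shows "bounded (range (\<lambda>t. mat_exp (mat_scale (\<i> * of_real t) M)))"
proof -
  let ?U = "\<lambda>t. mat_exp (mat_scale (\<i> * of_real t) M)"
  have "(\<chi> i j. cnj (?U t $ j $ i)) = transpose (?U (- t))" for t
    by (simp add: vec_eq_iff transpose_def cnj_mat_exp_i_scale_nth[OF real])
  also have "transpose (?U (- t)) = ?U (- t)" for t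
    by (simp add: transpose_mat_exp transpose_mat_scale symmetric)
  finally have "?U t ** (\<chi> i j. cnj (?U t $ j $ i)) = mat 1" for t
    by (simp add: mat_exp_mat_scale_add mat_exp_mat_scale_zero flip: distrib_left)
  then have "norm (?U t) = sqrt (real CARD('n))" for t
    by (rule norm_eq_sqrt_card_if_unitary)
  then show ?thesis
    unfolding bounded_iff by auto
qed

lemma cnj_adj_matrix_nth [simp]: "cnj (adj_matrix E $ i $ j) = adj_matrix E $ i $ j"
  by (simp add: adj_matrix_def)

lemma transpose_adj_matrix: "simple_graph E \<Longrightarrow> transpose (adj_matrix E) = adj_matrix E"
  by (simp add: adj_matrix_def simple_graph_def transpose_def vec_eq_iff)

theorem corollary4p1:
  fixes E :: "'n::finite \<Rightarrow> 'n \<Rightarrow> bool" and a b :: 'n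
  assumes "simple_graph E"
  shows "cnj ` closure {mat_exp (mat_scale (\<i> * complex_of_real t) (adj_matrix E)) $ a $ b | t. t \<ge> 0}
       = closure {mat_exp (mat_scale (\<i> * complex_of_real t) (adj_matrix E)) $ a $ b | t. t \<ge> 0}"
proof -
  define U where "U t = mat_exp (mat_scale (\<i> * complex_of_real t) (adj_matrix E))" for t
  have add: "U (s + t) = U s ** U t" for s t
    by (simp add: U_def mat_exp_mat_scale_add distrib_left)
  have zero: "U 0 = mat 1"
    by (simp add: U_def mat_exp_mat_scale_zero)
  have bounded: "bounded (range U)"
    unfolding U_def
    by (rule bounded_range_mat_exp_i_scale[OF transpose_adj_matrix[OF assms] cnj_adj_matrix_nth])
  have "cnj (U t $ a $ b) = U (- t) $ a $ b" for t
    by (simp add: U_def cnj_mat_exp_i_scale_nth)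
  then have "cnj ` {U t $ a $ b | t. t \<ge> 0} \<subseteq> closure {U t $ a $ b | t. t \<ge> 0}"
    using bounded_matrix_group_nth_neg_in_closure_nonneg[OF add zero bounded] by auto
  then show ?thesis
    unfolding U_def by (rule cnj_image_closure_eq)
qed

end
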